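(* Let $m$ be a positive integer, $\gamma\in C^m(\mathbb{R},\mathbb{R}^3)$, and $K\subseteq\mathbb{R}$ a compact set containing at least $m+1$ points. If $\gamma$ satisfies the $A/V$ condition on $K$, then $$\lim_{\substack{\operatorname{diam}X\to0\\ a,b\in X\subseteq K,\ a<b\\ \#X=m+1}}\left|\frac{A(\gamma;a,b)}{V(\gamma;a,b)}-\frac{A[X,\gamma;a,b]}{V[X,\gamma;a,b]}\right|=0,$$ i.e. for every $\varepsilon>0$ there is $\delta>0$ such that the displayed difference is $<\varepsilon$ for all $X\subseteq K$ with $\#X=m+1$, $\operatorname{diam}X<\delta$, and $a,b\in X$ with $a<b$. In particular, $\gamma$ satisfies the discrete $A/V$ condition on $K$.
   Context: $C^m(\mathbb{R},\mathbb{R}^3)$: curves whose components are $m$-times continuously differentiable with bounded $m$th derivative. For $\gamma=(f,g,h)$ and $a\in\mathbb{R}$, $T_af(x)=\sum_{k=0}^m\frac{f^{(k)}(a)}{k!}(x-a)^k$ (similarly $T_ag$); $A(\gamma;a,b)= h(b)-h(a)-2\int_a^b\big((T_af)'T_ag-(T_ag)'T_af\big) + 2f(a)(g(b)-T_ag(b)) - 2g(a)(f(b)-T_af(b))$, $V(\gamma;a,b)=(b-a)^{2m}+(b-a)^m\int_a^b(|(T_af)'|+|(T_ag)'|)$. $\gamma$ satisfies the $A/V$ condition on $E$ if for every $\varepsilon>0$ there is $\delta>0$ with $|A(\gamma;a,b)/V(\gamma;a,b)|<\varepsilon$ for all $a,b\in E$ with $0<b-a<\delta$. For $X$ a set of $m+1$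 distinct points, $P(X;\phi)$ is the unique polynomial of degree $\le m$ agreeing with $\phi$ on $X$; $P_f=P(X;f)$, $P_g=P(X;g)$, and for $a,b\in X$: $A[X,\gamma;a,b]=h(b)-h(a)-2\int_a^b(P_f'P_g-P_g'P_f)$, $V[X,\gamma;a,b]=\operatorname{diam}(X)^{2m}+\operatorname{diam}(X)^m\int_a^b(|P_f'|+|P_g'|)$. $\gamma$ satisfies the discrete $A/V$ condition on $E$ if for every $\varepsilon>0$ there is $\delta>0$ such that $|A[X,\gamma;a,b]/V[X,\gamma;a,b]|<\varepsilon$ for all $X\subseteq E$ with $\#X=m+1$, $\operatorname{diam}X<\delta$, and $a,b\in X$ with $a<b$. *)

theory Defs
  imports "HOL-Analysis.Analysis" "HOL-Computational_Algebra.Polynomial"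
begin

text \<open>A curve gamma = (f,g,h) in C^m(R,R^3) is represented by its three real component functions.\<close>
definition Cm :: "nat \<Rightarrow> (real \<Rightarrow> real) \<Rightarrow> bool" where
  "Cm m \<phi> \<longleftrightarrow>
     (\<forall>k<m. \<forall>x. ((deriv ^^ k) \<phi> has_real_derivative (deriv ^^ Suc k) \<phi> x) (at x))
     \<and> continuous_on UNIV ((deriv ^^ m) \<phi>)
     \<and> bounded (range ((deriv ^^ m) \<phi>))"

definition Cm_curve :: "nat \<Rightarrow> (real \<Rightarrow> real) \<Rightarrow> (real \<Rightarrow> real) \<Rightarrow> (real \<Rightarrow> real) \<Rightarrow> bool" where
  "Cm_curve m f g h \<longleftrightarrow> Cm m f \<and> Cm m g \<and> Cm m h"

definition taylor :: "nat \<Rightarrow> (real \<Rightarrow> real) \<Rightarrow> real \<Rightarrow> real \<Rightarrow> real" where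
  "taylor m \<phi> a x = (\<Sum>k\<le>m. (deriv ^^ k) \<phi> a / fact k * (x - a) ^ k)"

definition A_cont :: "nat \<Rightarrow> (real \<Rightarrow> real) \<Rightarrow> (real \<Rightarrow> real) \<Rightarrow> (real \<Rightarrow> real) \<Rightarrow> real \<Rightarrow> real \<Rightarrow> real" where
  "A_cont m f g h a b =
     h b - h a
     - 2 * integral {a..b} (\<lambda>x. deriv (taylor m f a) x * taylor m g a x
                               - deriv (taylor m g a) x * taylor m f a x)
     + 2 * f a * (g b - taylor m g a b) - 2 * g a * (f b - taylor m f a b)"

definition V_cont :: "nat \<Rightarrow> (real \<Rightarrow> real) \<Rightarrow> (real \<Rightarrow> real) \<Rightarrow> real \<Rightarrow> real \<Rightarrow> real" where
  "V_cont m f g a b =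
     (b - a) ^ (2 * m)
     + (b - a) ^ m * integral {a..b} (\<lambda>x. \<bar>deriv (taylor m f a) x\<bar> + \<bar>deriv (taylor m g a) x\<bar>)"

definition AV_condition :: "nat \<Rightarrow> (real \<Rightarrow> real) \<Rightarrow> (real \<Rightarrow> real) \<Rightarrow> (real \<Rightarrow> real) \<Rightarrow> real set \<Rightarrow> bool" where
  "AV_condition m f g h E \<longleftrightarrow>
     (\<forall>\<epsilon>>0. \<exists>\<delta>>0. \<forall>a\<in>E. \<forall>b\<in>E. 0 < b - a \<and> b - a < \<delta> \<longrightarrow>
        \<bar>A_cont m f g h a b / V_cont m f g a b\<bar> < \<epsilon>)"

text \<open>P(X;phi): the unique polynomial of degree at most m agreeing with phi on X (#X = m+1).\<close>
definition interp :: "nat \<Rightarrow> real set \<Rightarrow> (real \<Rightarrow> real) \<Rightarrow> real poly" where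
  "interp m X \<phi> = (THE p. degree p \<le> m \<and> (\<forall>x\<in>X. poly p x = \<phi> x))"

definition A_disc :: "nat \<Rightarrow> real set \<Rightarrow> (real \<Rightarrow> real) \<Rightarrow> (real \<Rightarrow> real) \<Rightarrow> (real \<Rightarrow> real) \<Rightarrow> real \<Rightarrow> real \<Rightarrow> real" where
  "A_disc m X f g h a b =
     h b - h a
     - 2 * integral {a..b} (\<lambda>x. poly (pderiv (interp m X f)) x * poly (interp m X g) x
                               - poly (pderiv (interp m X g)) x * poly (interp m X f) x)"

definition V_disc :: "nat \<Rightarrow> real set \<Rightarrow> (real \<Rightarrow> real) \<Rightarrow> (real \<Rightarrow> real) \<Rightarrow> real \<Rightarrow> real \<Rightarrow> real" where
  "V_disc m X f g a b =
     diameter X ^ (2 * m)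
     + diameter X ^ m * integral {a..b} (\<lambda>x. \<bar>poly (pderiv (interp m X f)) x\<bar>
                                            + \<bar>poly (pderiv (interp m X g)) x\<bar>)"

definition discrete_AV_condition :: "nat \<Rightarrow> (real \<Rightarrow> real) \<Rightarrow> (real \<Rightarrow> real) \<Rightarrow> (real \<Rightarrow> real) \<Rightarrow> real set \<Rightarrow> bool" where
  "discrete_AV_condition m f g h E \<longleftrightarrow>
     (\<forall>\<epsilon>>0. \<exists>\<delta>>0. \<forall>X a b. X \<subseteq> E \<and> card X = m + 1 \<and> diameter X < \<delta>
        \<and> a \<in> X \<and> b \<in> X \<and> a < b \<longrightarrow>
        \<bar>A_disc m X f g h a b / V_disc m X f g a b\<bar> < \<epsilon>)"

end

(*
  Let X be a set of m + 1 points of diameter D and a, b \<in> X. For every k \<le> m both the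
  interpolant P(X;f) and the Taylor polynomial T_a f agree with f^(k) somewhere in the convex
  hull of X: the interpolant by repeated Rolle, the Taylor polynomial at a. Integrating down from
  the oscillation w of f^(m) on the hull gives |P^(k) - T^(k)| \<le> 2 w D^(m-k). Write P = T + U.
  In the area integral the terms linear in U, with T frozen at a, integrate exactly to the
  boundary terms of A(gamma;a,b); the rest is O(w V[X,gamma;a,b]). Likewise
  V(gamma;a,b) \<le> 3 V[X,gamma;a,b], so |A[X]/V[X]| \<le> 3 |A/V| + O(w). Uniform continuity of
  f^(m), g^(m) on a bounded interval containing K makes w small with diam X; this gives the
  discrete condition, and the limit statement follows by the triangle inequality.
*)

theory Submission
  imports Defs
begin

section \<open>Interpolation and Taylor polynomials\<close>

lemma finite_if_card_eq_Suc: "card X = Suc n \<Longrightarrow> finite X"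
  by (rule card_ge_0_finite) simp

lemma interpolating_poly_exists:
  fixes \<phi> :: "'a::field \<Rightarrow> 'a"
  assumes "finite X"
  shows "\<exists>p. degree p \<le> card X - 1 \<and> (\<forall>x\<in>X. poly p x = \<phi> x)"
  using assms
proof (induction X rule: finite_induct)
  case empty
  show ?case by (intro exI[of _ 0]) simp
next
  case (insert x X)
  obtain p where p: "degree p \<le> card X - 1" "\<forall>y\<in>X. poly p y = \<phi> y"
    using insert.IH by blast
  define q where "q = (\<Prod>y\<in>X. [:-y, 1:])"
  have q_X: "poly q y = 0" if "y \<in> X" for y
    unfolding q_def poly_prod using insert.hyps(1) that by (intro prod_zero) auto
  have q_x: "poly q x \<noteq> 0"
    unfolding q_def poly_prod using insert.hyps by auto
  have "degree q \<le> card X"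
    unfolding q_def using degree_prod_sum_le[OF insert.hyps(1), of "\<lambda>y. [:-y, 1:]"] by simp
  define p' where "p' = p + smult ((\<phi> x - poly p x) / poly q x) q"
  have "degree p' \<le> card X"
    unfolding p'_def using p(1) \<open>degree q \<le> card X\<close> degree_add_le[of p "card X"] degree_smult_le
    by (metis diff_le_self le_trans)
  moreover have "\<forall>y\<in>insert x X. poly p' y = \<phi> y"
    using q_x q_X p(2) by (auto simp: p'_def)
  ultimately show ?case using insert.hyps by (intro exI[of _ p']) simp
qed

lemma poly_eqI_card_gt_degree:
  fixes p q :: "'a::idom poly"
  assumes "degree p < card X" "degree q < card X" "\<And>x. x \<in> X \<Longrightarrow> poly p x = poly q x"
  shows "p = q"
proof (rule ccontr)
  assume "p \<noteq> q"
  then have nz: "p - q \<noteq> 0" by simp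
  have "card X \<le> card {x. poly (p - q) x = 0}"
    using assms(3) poly_roots_finite[OF nz] by (intro card_mono) auto
  also have "\<dots> \<le> degree (p - q)" by (rule card_poly_roots_bound[OF nz])
  also have "\<dots> < card X" using assms(1,2) degree_diff_le_max[of p q] by linarith
  finally show False by simp
qed

lemma interp_spec:
  fixes \<phi> :: "real \<Rightarrow> real"
  assumes "card X = m + 1"
  shows "degree (interp m X \<phi>) \<le> m" and "\<And>x. x \<in> X \<Longrightarrow> poly (interp m X \<phi>) x = \<phi> x"
proof -
  have "\<exists>!p. degree p \<le> m \<and> (\<forall>x\<in>X. poly p x = \<phi> x)"
  proof (rule ex_ex1I)
    show "\<exists>p. degree p \<le> m \<and> (\<forall>x\<in>X. poly p x = \<phi> x)"
      using interpolating_poly_exists[of X \<phi>] assms finite_if_card_eq_Suc by auto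
  next
    fix p q assume "degree p \<le> m \<and> (\<forall>x\<in>X. poly p x = \<phi> x)" "degree q \<le> m \<and> (\<forall>x\<in>X. poly q x = \<phi> x)"
    then show "p = q" using assms by (intro poly_eqI_card_gt_degree[of p X q]) auto
  qed
  then have "degree (interp m X \<phi>) \<le> m \<and> (\<forall>x\<in>X. poly (interp m X \<phi>) x = \<phi> x)"
    unfolding interp_def by (rule theI')
  then show "degree (interp m X \<phi>) \<le> m" and "\<And>x. x \<in> X \<Longrightarrow> poly (interp m X \<phi>) x = \<phi> x"
    by auto
qed

definition taylor_poly :: "nat \<Rightarrow> (real \<Rightarrow> real) \<Rightarrow> real \<Rightarrow> real poly" where
  "taylor_poly m \<phi> a = (\<Sum>k\<le>m. monom ((deriv ^^ k) \<phi> a / fact k) k) \<circ>\<^sub>p [:-a, 1:]"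

lemma poly_taylor_poly: "poly (taylor_poly m \<phi> a) = taylor m \<phi> a"
  by (simp add: fun_eq_iff taylor_poly_def taylor_def poly_pcompose poly_sum poly_monom)

lemma degree_taylor_poly: "degree (taylor_poly m \<phi> a) \<le> m"
proof -
  have "degree (\<Sum>k\<le>m. monom ((deriv ^^ k) \<phi> a / fact k) k) \<le> m"
    by (rule degree_sum_le) (auto intro: order.trans[OF degree_monom_le])
  then show ?thesis unfolding taylor_poly_def by (simp add: degree_pcompose)
qed

lemma higher_pderiv_pcompose_shift:
  "(pderiv ^^ k) (p \<circ>\<^sub>p [:-a, 1:]) = (pderiv ^^ k) p \<circ>\<^sub>p [:-a, 1 :: 'a::idom:]"
  by (induction k) (simp_all add: pderiv_pcompose pderiv_pCons)

lemma poly_higher_pderiv_taylor_poly: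
  assumes "k \<le> m"
  shows "poly ((pderiv ^^ k) (taylor_poly m \<phi> a)) a = (deriv ^^ k) \<phi> a"
proof -
  let ?Q = "\<Sum>k\<le>m. monom ((deriv ^^ k) \<phi> a / fact k) k"
  have "poly ((pderiv ^^ k) (taylor_poly m \<phi> a)) a = coeff ((pderiv ^^ k) ?Q) 0"
    unfolding taylor_poly_def higher_pderiv_pcompose_shift by (simp add: poly_pcompose poly_0_coeff_0)
  also have "\<dots> = fact k * coeff ?Q k"
    by (simp add: coeff_higher_pderiv pochhammer_fact)
  also have "coeff ?Q k = (deriv ^^ k) \<phi> a / fact k"
    using assms by (simp add: coeff_sum)
  finally show ?thesis by simp
qed

section \<open>Rolle's theorem and derivative bounds\<close>

lemma Rolle_card_zeros:
  fixes G G' :: "real \<Rightarrow> real"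
  assumes der: "\<And>x. (G has_real_derivative G' x) (at x)"
    and "card Z = Suc j" "\<And>z. z \<in> Z \<Longrightarrow> G z = 0"
  shows "\<exists>Z'. Z' \<subseteq> {Min Z..Max Z} \<and> finite Z' \<and> card Z' = j \<and> (\<forall>z\<in>Z'. G' z = 0)"
  using assms(2,3)
proof (induction j arbitrary: Z)
  case 0
  show ?case by (intro exI[of _ "{}"]) simp
next
  case (Suc j)
  have fin: "finite Z" using Suc.prems(1) by (rule finite_if_card_eq_Suc)
  define z1 where "z1 = Max Z"
  define Z0 where "Z0 = Z - {z1}"
  define z0 where "z0 = Max Z0"
  have "z1 \<in> Z" unfolding z1_def using fin Suc.prems(1) by (intro Max_in) auto
  then have card_Z0: "card Z0 = Suc j" unfolding Z0_def using Suc.prems(1) by simp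
  then have fin0: "finite Z0" "Z0 \<noteq> {}" by (auto intro: finite_if_card_eq_Suc)
  then have "z0 \<in> Z0" unfolding z0_def by simp
  then have "z0 \<in> Z" "z0 < z1" unfolding Z0_def z1_def using fin by (auto simp: order.strict_iff_order)
  obtain Z0' where Z0': "Z0' \<subseteq> {Min Z0..z0}" "finite Z0'" "card Z0' = j" "\<forall>z\<in>Z0'. G' z = 0"
    using Suc.IH[OF card_Z0] Suc.prems(2) unfolding z0_def Z0_def by auto
  have "G z0 = G z1" using Suc.prems(2) \<open>z0 \<in> Z\<close> \<open>z1 \<in> Z\<close> by simp
  moreover have "continuous_on {z0..z1} G"
    using der by (meson DERIV_isCont continuous_at_imp_continuous_on)
  ultimately obtain \<xi> where \<xi>: "z0 < \<xi>" "\<xi> < z1" "DERIV G \<xi> :> 0"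
    using Rolle[OF \<open>z0 < z1\<close>] der real_differentiable_def by blast
  have "G' \<xi> = 0" using DERIV_unique[OF der \<xi>(3)] .
  moreover have "\<xi> \<notin> Z0'" using Z0'(1) \<xi>(1) by auto
  moreover have "Min Z \<le> Min Z0"
    using fin fin0 unfolding Z0_def by (intro Min_antimono) auto
  moreover have "Min Z0 \<le> z0" using fin0 \<open>z0 \<in> Z0\<close> by simp
  ultimately show ?case
    using Z0' \<xi> by (intro exI[of _ "insert \<xi> Z0'"]) (auto simp: z1_def)
qed

lemma higher_Rolle:
  fixes F :: "nat \<Rightarrow> real \<Rightarrow> real"
  assumes der: "\<And>k x. k < n \<Longrightarrow> (F k has_real_derivative F (Suc k) x) (at x)"
    and card_Z: "card Z = Suc n" and zeros: "\<And>z. z \<in> Z \<Longrightarrow> F 0 z = 0"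
    and "k \<le> n"
  shows "\<exists>z\<in>{Min Z..Max Z}. F k z = 0"
proof -
  have "\<exists>Z'. Z' \<subseteq> {Min Z..Max Z} \<and> card Z' = Suc (n - k) \<and> (\<forall>z\<in>Z'. F k z = 0)"
    using \<open>k \<le> n\<close>
  proof (induction k)
    case 0
    show ?case using card_Z zeros finite_if_card_eq_Suc[OF card_Z] by (intro exI[of _ Z]) auto
  next
    case (Suc k)
    then have "k < n" by simp
    obtain Zk where Zk: "Zk \<subseteq> {Min Z..Max Z}" "card Zk = Suc (Suc (n - Suc k))"
      "\<forall>z\<in>Zk. F k z = 0"
      using Suc by (auto simp: Suc_diff_Suc)
    obtain Z' where Z': "Z' \<subseteq> {Min Zk..Max Zk}" "card Z' = Suc (n - Suc k)"
      "\<forall>z\<in>Z'. F (Suc k) z = 0"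
      using Rolle_card_zeros[OF der[OF \<open>k < n\<close>] Zk(2)] Zk(3) by auto
    have "finite Zk" "Zk \<noteq> {}" using Zk(2) by (auto intro: finite_if_card_eq_Suc)
    then have "{Min Zk..Max Zk} \<subseteq> {Min Z..Max Z}"
      using Zk(1) Min_in Max_in by fastforce
    then show ?case using Z' by blast
  qed
  then obtain Z' where "Z' \<subseteq> {Min Z..Max Z}" "card Z' = Suc (n - k)" "\<forall>z\<in>Z'. F k z = 0"
    by blast
  then show ?thesis by (metis card.empty ex_in_conv nat.distinct(1) subsetD)
qed

lemma derivative_chain_bound:
  fixes F :: "nat \<Rightarrow> real \<Rightarrow> real"
  assumes der: "\<And>k x. k < n \<Longrightarrow> (F k has_real_derivative F (Suc k) x) (at x)"
    and zeros: "\<And>k. k < n \<Longrightarrow> \<exists>z\<in>{\<alpha>..\<beta>}. F k z = 0"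
    and top: "\<And>x. x \<in> {\<alpha>..\<beta>} \<Longrightarrow> \<bar>F n x\<bar> \<le> M"
    and "k \<le> n" "x \<in> {\<alpha>..\<beta>}"
  shows "\<bar>F k x\<bar> \<le> M * (\<beta> - \<alpha>) ^ (n - k)"
proof -
  have "\<forall>x\<in>{\<alpha>..\<beta>}. \<bar>F (n - j) x\<bar> \<le> M * (\<beta> - \<alpha>) ^ j" if "j \<le> n" for j
    using that
  proof (induction j)
    case 0
    then show ?case using top by simp
  next
    case (Suc j)
    define k where "k = n - Suc j"
    have "k < n" and Suc_k: "Suc k = n - j" using Suc.prems unfolding k_def by auto
    obtain z where z: "z \<in> {\<alpha>..\<beta>}" "F k z = 0" using zeros[OF \<open>k < n\<close>] by blast
    have bound_Suc_k: "\<forall>x\<in>{\<alpha>..\<beta>}. \<bar>F (Suc k) x\<bar> \<le> M * (\<beta> - \<alpha>) ^ j"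
      using Suc by (simp add: Suc_k)
    have "0 \<le> M * (\<beta> - \<alpha>) ^ j" using bound_Suc_k z(1) by (meson abs_ge_zero order_trans)
    show ?case
    proof
      fix x assume x: "x \<in> {\<alpha>..\<beta>}"
      have "\<bar>F k x - F k z\<bar> \<le> M * (\<beta> - \<alpha>) ^ j * \<bar>x - z\<bar>"
        using field_differentiable_bound[of "{\<alpha>..\<beta>}" "F k" "F (Suc k)" "M * (\<beta> - \<alpha>) ^ j" x z]
          der[OF \<open>k < n\<close>] bound_Suc_k x z(1) by (auto intro: has_field_derivative_at_within)
      also have "\<dots> \<le> M * (\<beta> - \<alpha>) ^ j * (\<beta> - \<alpha>)"
        using x z(1) \<open>0 \<le> M * (\<beta> - \<alpha>) ^ j\<close> by (intro mult_left_mono) auto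
      finally show "\<bar>F (n - Suc j) x\<bar> \<le> M * (\<beta> - \<alpha>) ^ Suc j"
        using z(2) by (simp add: k_def[symmetric] algebra_simps)
    qed
  qed
  then show ?thesis using assms(4,5) by (metis diff_diff_cancel diff_le_self)
qed

lemma has_real_derivative_higher_deriv_minus_poly:
  assumes "Cm m f" "k < m"
  shows "((\<lambda>x. (deriv ^^ k) f x - poly ((pderiv ^^ k) p) x) has_real_derivative
          (deriv ^^ Suc k) f x - poly ((pderiv ^^ Suc k) p) x) (at x)"
  using assms poly_DERIV[of "(pderiv ^^ k) p" x] unfolding Cm_def by (auto intro: DERIV_diff)

lemma Cm_poly_error_bound:
  fixes f :: "real \<Rightarrow> real" and p :: "real poly"
  assumes Cm: "Cm m f" and "degree p \<le> m"
    and zeros: "\<And>k. k \<le> m \<Longrightarrow> \<exists>z\<in>{\<alpha>..\<beta>}. (deriv ^^ k) f z = poly ((pderiv ^^ k) p) z"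
    and osc: "\<And>x y. x \<in> {\<alpha>..\<beta>} \<Longrightarrow> y \<in> {\<alpha>..\<beta>} \<Longrightarrow>
                \<bar>(deriv ^^ m) f x - (deriv ^^ m) f y\<bar> \<le> \<omega>"
    and "k \<le> m" "x \<in> {\<alpha>..\<beta>}"
  shows "\<bar>(deriv ^^ k) f x - poly ((pderiv ^^ k) p) x\<bar> \<le> \<omega> * (\<beta> - \<alpha>) ^ (m - k)"
proof -
  define F where "F k x = (deriv ^^ k) f x - poly ((pderiv ^^ k) p) x" for k x
  have "degree ((pderiv ^^ m) p) = 0" using \<open>degree p \<le> m\<close> by (simp add: degree_higher_pderiv)
  then obtain c where c: "(pderiv ^^ m) p = [:c:]" by (metis degree_eq_zeroE)
  obtain z where z: "z \<in> {\<alpha>..\<beta>}" "(deriv ^^ m) f z = c" using zeros[of m] c by auto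
  have "\<bar>F m y\<bar> \<le> \<omega>" if "y \<in> {\<alpha>..\<beta>}" for y
    using osc[OF that z(1)] z(2) c unfolding F_def by simp
  then show ?thesis
    using derivative_chain_bound[of m F \<alpha> \<beta> \<omega> k x] zeros assms(5,6)
      has_real_derivative_higher_deriv_minus_poly[OF Cm]
    unfolding F_def by fastforce
qed

lemma interp_higher_deriv_zeros:
  assumes "Cm m f" "card X = m + 1" "k \<le> m"
  shows "\<exists>z\<in>{Min X..Max X}. (deriv ^^ k) f z = poly ((pderiv ^^ k) (interp m X f)) z"
  using higher_Rolle[of m "\<lambda>k x. (deriv ^^ k) f x - poly ((pderiv ^^ k) (interp m X f)) x" X k]
    has_real_derivative_higher_deriv_minus_poly[OF assms(1)] interp_spec(2)[OF assms(2)] assms(2,3)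
  by auto

section \<open>Interpolant versus Taylor polynomial\<close>

lemma diameter_finite_real:
  fixes X :: "real set"
  assumes "finite X" "X \<noteq> {}"
  shows "diameter X = Max X - Min X"
proof (rule antisym)
  have "diameter X \<le> diameter {Min X..Max X}"
    by (rule diameter_subset) (use assms in auto)
  also have "\<dots> = Max X - Min X"
    using Max_ge[OF assms(1) Min_in[OF assms]] by simp
  finally show "diameter X \<le> Max X - Min X" .
  have "dist (Max X) (Min X) \<le> diameter X"
    by (rule diameter_bounded_bound) (use assms finite_imp_bounded in auto)
  then show "Max X - Min X \<le> diameter X" using assms by (simp add: dist_real_def)
qed

lemma diff_le_diameter:
  fixes X :: "real set"
  assumes "bounded X" "a \<in> X" "b \<in> X"
  shows "b - a \<le> diameter X"
  using diameter_bounded_bound[OF assms(1) assms(3) assms(2)] by (simp add: dist_real_def)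

lemma interp_taylor_poly_close:
  fixes f :: "real \<Rightarrow> real"
  assumes Cm: "Cm m f" and card_X: "card X = m + 1" and "a \<in> X" "k \<le> m" "x \<in> {Min X..Max X}"
    and osc: "\<And>x y. x \<in> {Min X..Max X} \<Longrightarrow> y \<in> {Min X..Max X} \<Longrightarrow>
                \<bar>(deriv ^^ m) f x - (deriv ^^ m) f y\<bar> \<le> \<omega>"
  shows "\<bar>poly ((pderiv ^^ k) (interp m X f)) x - poly ((pderiv ^^ k) (taylor_poly m f a)) x\<bar>
           \<le> 2 * \<omega> * diameter X ^ (m - k)"
proof -
  have X: "finite X" "X \<noteq> {}" using card_X finite_if_card_eq_Suc by auto
  have "a \<in> {Min X..Max X}" using X \<open>a \<in> X\<close> by auto
  then have taylor_zeros: "\<exists>z\<in>{Min X..Max X}. (deriv ^^ j) f z = poly ((pderiv ^^ j) (taylor_poly m f a)) z"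
    if "j \<le> m" for j
    using poly_higher_pderiv_taylor_poly[OF that] by metis
  have "\<bar>(deriv ^^ k) f x - poly ((pderiv ^^ k) (interp m X f)) x\<bar> \<le> \<omega> * diameter X ^ (m - k)"
    using Cm_poly_error_bound[OF Cm interp_spec(1)[OF card_X] interp_higher_deriv_zeros[OF Cm card_X]
        osc assms(4,5)]
    by (simp add: diameter_finite_real[OF X])
  moreover have "\<bar>(deriv ^^ k) f x - poly ((pderiv ^^ k) (taylor_poly m f a)) x\<bar> \<le> \<omega> * diameter X ^ (m - k)"
    using Cm_poly_error_bound[OF Cm degree_taylor_poly taylor_zeros osc assms(4,5)]
    by (simp add: diameter_finite_real[OF X])
  ultimately show ?thesis by linarith
qed

definition interp_taylor_close :: "nat \<Rightarrow> real set \<Rightarrow> (real \<Rightarrow> real) \<Rightarrow> real \<Rightarrow> real \<Rightarrow> real \<Rightarrow> bool"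
  where "interp_taylor_close m X \<phi> a b \<eta> \<longleftrightarrow> (\<forall>x\<in>{a..b}.
    \<bar>poly (interp m X \<phi>) x - poly (taylor_poly m \<phi> a) x\<bar> \<le> \<eta> * diameter X ^ m \<and>
    \<bar>poly (pderiv (interp m X \<phi>)) x - poly (pderiv (taylor_poly m \<phi> a)) x\<bar> \<le> \<eta> * diameter X ^ (m - 1))"

lemma interp_taylor_close_uniformly:
  fixes \<phi> :: "real \<Rightarrow> real"
  assumes Cm: "Cm m \<phi>" and "0 < m" "bounded K" "0 < \<eta>"
  obtains \<delta> where "0 < \<delta>"
    "\<And>X a b. X \<subseteq> K \<Longrightarrow> card X = m + 1 \<Longrightarrow> diameter X < \<delta> \<Longrightarrow> a \<in> X \<Longrightarrow> b \<in> X \<Longrightarrow>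
       interp_taylor_close m X \<phi> a b \<eta>"
proof -
  obtain B where "\<forall>x\<in>K. \<bar>x\<bar> \<le> B" using \<open>bounded K\<close> bounded_real by blast
  then have K: "K \<subseteq> {-B..B}" by (auto simp: abs_le_iff)
  have "uniformly_continuous_on {-B..B} ((deriv ^^ m) \<phi>)"
    using Cm unfolding Cm_def by (intro compact_uniformly_continuous) (auto intro: continuous_on_subset)
  then obtain \<delta> where "0 < \<delta>" and \<delta>: "\<And>x y. x \<in> {-B..B} \<Longrightarrow> y \<in> {-B..B} \<Longrightarrow> dist y x < \<delta> \<Longrightarrow>
      dist ((deriv ^^ m) \<phi> y) ((deriv ^^ m) \<phi> x) < \<eta> / 2"
    unfolding uniformly_continuous_on_def using \<open>0 < \<eta>\<close> by (metis half_gt_zero)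
  show thesis
  proof (rule that[OF \<open>0 < \<delta>\<close>])
    fix X a b
    assume "X \<subseteq> K" and card_X: "card X = m + 1" and "diameter X < \<delta>" "a \<in> X" "b \<in> X"
    have X: "finite X" "X \<noteq> {}" using card_X finite_if_card_eq_Suc by auto
    then have hull: "{Min X..Max X} \<subseteq> {-B..B}" using \<open>X \<subseteq> K\<close> K Min_in Max_in by fastforce
    have osc: "\<bar>(deriv ^^ m) \<phi> y - (deriv ^^ m) \<phi> z\<bar> \<le> \<eta> / 2"
      if "y \<in> {Min X..Max X}" "z \<in> {Min X..Max X}" for y z
    proof -
      have "dist y z < \<delta>"
        using that \<open>diameter X < \<delta>\<close> diameter_finite_real[OF X] by (auto simp: dist_real_def)
      then show ?thesis using \<delta>[of z y] that hull by (force simp: dist_real_def)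
    qed
    have "{a..b} \<subseteq> {Min X..Max X}" using X \<open>a \<in> X\<close> \<open>b \<in> X\<close> by auto
    then have "\<bar>poly ((pderiv ^^ k) (interp m X \<phi>)) x - poly ((pderiv ^^ k) (taylor_poly m \<phi> a)) x\<bar>
        \<le> \<eta> * diameter X ^ (m - k)" if "k \<le> 1" "x \<in> {a..b}" for k x
      using interp_taylor_poly_close[OF Cm card_X \<open>a \<in> X\<close> _ _ osc, of k x] that \<open>0 < m\<close> by auto
    from this[of 0] this[of 1] show "interp_taylor_close m X \<phi> a b \<eta>"
      unfolding interp_taylor_close_def by simp
  qed
qed

section \<open>Area and length integrals of polynomial curves\<close>

definition area_integral :: "real poly \<Rightarrow> real poly \<Rightarrow> real \<Rightarrow> real \<Rightarrow> real" where
  "area_integral p q a b =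
     integral {a..b} (\<lambda>x. poly (pderiv p) x * poly q x - poly (pderiv q) x * poly p x)"

definition l1_length :: "real poly \<Rightarrow> real poly \<Rightarrow> real \<Rightarrow> real \<Rightarrow> real" where
  "l1_length p q a b = integral {a..b} (\<lambda>x. \<bar>poly (pderiv p) x\<bar> + \<bar>poly (pderiv q) x\<bar>)"

lemma deriv_poly: "deriv (poly p) = poly (pderiv (p :: real poly))"
  by (simp add: fun_eq_iff DERIV_imp_deriv)

lemma A_cont_eq:
  "A_cont m f g h a b =
     h b - h a - 2 * area_integral (taylor_poly m f a) (taylor_poly m g a) a b
     + 2 * f a * (g b - poly (taylor_poly m g a) b) - 2 * g a * (f b - poly (taylor_poly m f a) b)"
  unfolding A_cont_def area_integral_def poly_taylor_poly[symmetric] deriv_poly ..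

lemma A_disc_eq: "A_disc m X f g h a b = h b - h a - 2 * area_integral (interp m X f) (interp m X g) a b"
  unfolding A_disc_def area_integral_def ..

lemma V_cont_eq:
  "V_cont m f g a b = (b - a) ^ (2 * m) + (b - a) ^ m * l1_length (taylor_poly m f a) (taylor_poly m g a) a b"
  unfolding V_cont_def l1_length_def poly_taylor_poly[symmetric] deriv_poly ..

lemma V_disc_eq:
  "V_disc m X f g a b = diameter X ^ (2 * m) + diameter X ^ m * l1_length (interp m X f) (interp m X g) a b"
  unfolding V_disc_def l1_length_def ..

lemma l1_length_nonneg: "0 \<le> l1_length p q a b"
  unfolding l1_length_def
  by (rule integral_nonneg) (auto intro!: integrable_continuous_interval continuous_intros)

lemma poly_pderiv_has_integral:
  fixes p :: "real poly"
  assumes "a \<le> b"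
  shows "(poly (pderiv p) has_integral (poly p b - poly p a)) {a..b}"
proof (rule fundamental_theorem_of_calculus[OF assms])
  fix x
  show "(poly p has_vector_derivative poly (pderiv p) x) (at x within {a..b})"
    using poly_DERIV[of p x] has_real_derivative_iff_has_vector_derivative
      has_vector_derivative_at_within by blast
qed

lemma abs_poly_diff_le_integral_pderiv:
  fixes p :: "real poly"
  assumes "a \<le> x" "x \<le> b"
  shows "\<bar>poly p x - poly p a\<bar> \<le> integral {a..b} (\<lambda>t. \<bar>poly (pderiv p) t\<bar>)"
proof -
  have "\<bar>poly p x - poly p a\<bar> = \<bar>integral {a..x} (poly (pderiv p))\<bar>"
    using integral_unique[OF poly_pderiv_has_integral[OF assms(1), of p]] by simp
  also have "\<dots> \<le> integral {a..x} (\<lambda>t. \<bar>poly (pderiv p) t\<bar>)"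
  proof -
    have "poly (pderiv p) integrable_on {a..x}" "(\<lambda>t. \<bar>poly (pderiv p) t\<bar>) integrable_on {a..x}"
      by (auto intro!: integrable_continuous_interval continuous_intros)
    then show ?thesis using integral_norm_bound_integral by fastforce
  qed
  also have "\<dots> \<le> integral {a..b} (\<lambda>t. \<bar>poly (pderiv p) t\<bar>)"
    using assms by (intro integral_subset_le) (auto intro!: integrable_continuous_interval continuous_intros)
  finally show ?thesis .
qed

lemma abs_poly_diff_le_l1_length:
  assumes "a \<le> x" "x \<le> b"
  shows "\<bar>poly p x - poly p a\<bar> \<le> l1_length p q a b" and "\<bar>poly q x - poly q a\<bar> \<le> l1_length p q a b"
proof -
  have "integral {a..b} (\<lambda>t. \<bar>poly (pderiv r) t\<bar>) \<le> l1_length p q a b" if "r = p \<or> r = q" for r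
    unfolding l1_length_def using that
    by (intro integral_le integrable_continuous_interval continuous_intros) auto
  then show "\<bar>poly p x - poly p a\<bar> \<le> l1_length p q a b" and "\<bar>poly q x - poly q a\<bar> \<le> l1_length p q a b"
    using abs_poly_diff_le_integral_pderiv[OF assms, of p] abs_poly_diff_le_integral_pderiv[OF assms, of q]
    by fastforce+
qed

lemma l1_length_perturb:
  assumes "a \<le> b"
    and "\<And>x. x \<in> {a..b} \<Longrightarrow> \<bar>poly (pderiv u) x\<bar> \<le> e \<and> \<bar>poly (pderiv w) x\<bar> \<le> e"
  shows "l1_length p q a b \<le> l1_length (p + u) (q + w) a b + 2 * e * (b - a)"
proof -
  have "l1_length p q a b
      \<le> integral {a..b} (\<lambda>x. (\<bar>poly (pderiv (p + u)) x\<bar> + \<bar>poly (pderiv (q + w)) x\<bar>) + 2 * e)"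
    unfolding l1_length_def
  proof (rule integral_le)
    fix x assume "x \<in> {a..b}"
    then show "\<bar>poly (pderiv p) x\<bar> + \<bar>poly (pderiv q) x\<bar>
        \<le> \<bar>poly (pderiv (p + u)) x\<bar> + \<bar>poly (pderiv (q + w)) x\<bar> + 2 * e"
      using assms(2)[OF \<open>x \<in> {a..b}\<close>] by (simp add: pderiv_add) linarith
  qed (intro integrable_continuous_interval continuous_intros)+
  also have "\<dots> = l1_length (p + u) (q + w) a b + integral {a..b} (\<lambda>x. 2 * e)"
    unfolding l1_length_def by (rule integral_add) (intro integrable_continuous_interval continuous_intros)+
  also have "integral {a..b} (\<lambda>x. 2 * e) = 2 * e * (b - a)"
    using assms(1) by simp
  finally show ?thesis .
qed

lemma abs_mult_diff_le:
  fixes x1 y1 x2 y2 :: real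
  assumes "\<bar>x1\<bar> \<le> A1" "\<bar>y1\<bar> \<le> B1" "\<bar>x2\<bar> \<le> A2" "\<bar>y2\<bar> \<le> B2"
  shows "\<bar>x1 * y1 - x2 * y2\<bar> \<le> A1 * B1 + A2 * B2"
proof -
  have "\<bar>x1\<bar> * \<bar>y1\<bar> \<le> A1 * B1" "\<bar>x2\<bar> * \<bar>y2\<bar> \<le> A2 * B2"
    using assms by (auto intro!: mult_mono)
  then show ?thesis using abs_triangle_ineq4[of "x1 * y1" "x2 * y2"] by (simp add: abs_mult)
qed

lemma area_integral_add_eq:
  assumes "a \<le> b" "poly u a = 0" "poly w a = 0"
  shows "area_integral (p + u) (q + w) a b - area_integral p q a b
           - (poly q a * poly u b - poly p a * poly w b)
         = integral {a..b} (\<lambda>x.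
             (poly (pderiv u) x * (poly q x - poly q a) - poly (pderiv w) x * (poly p x - poly p a))
             + (poly (pderiv p) x * poly w x - poly (pderiv q) x * poly u x)
             + (poly (pderiv u) x * poly w x - poly (pderiv w) x * poly u x))"
    (is "_ = integral {a..b} ?E")
proof -
  \<comment> \<open>the terms linear in u, w with p, q frozen at a form an exact derivative\<close>
  define r where "r = smult (poly q a) u - smult (poly p a) w"
  have "(poly (pderiv (p + u)) x * poly (q + w) x - poly (pderiv (q + w)) x * poly (p + u) x)
      - (poly (pderiv p) x * poly q x - poly (pderiv q) x * poly p x) = ?E x + poly (pderiv r) x" for x
    by (simp add: r_def pderiv_add pderiv_diff pderiv_smult algebra_simps)
  then have "area_integral (p + u) (q + w) a b - area_integral p q a b
      = integral {a..b} (\<lambda>x. ?E x + poly (pderiv r) x)"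
    unfolding area_integral_def
    by (subst integral_diff[symmetric]) (intro integrable_continuous_interval continuous_intros, simp)+
  also have "\<dots> = integral {a..b} ?E + integral {a..b} (poly (pderiv r))"
    by (rule integral_add) (intro integrable_continuous_interval continuous_intros)+
  also have "integral {a..b} (poly (pderiv r)) = poly q a * poly u b - poly p a * poly w b"
    using integral_unique[OF poly_pderiv_has_integral[OF assms(1), of r]] assms(2,3) by (simp add: r_def)
  finally show ?thesis by simp
qed

lemma area_integral_perturb:
  assumes "a \<le> b" "poly u a = 0" "poly w a = 0"
    and bounds: "\<And>x. x \<in> {a..b} \<Longrightarrow> \<bar>poly u x\<bar> \<le> e0 \<and> \<bar>poly w x\<bar> \<le> e0
                   \<and> \<bar>poly (pderiv u) x\<bar> \<le> e1 \<and> \<bar>poly (pderiv w) x\<bar> \<le> e1"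
  shows "\<bar>area_integral (p + u) (q + w) a b - area_integral p q a b
            - (poly q a * poly u b - poly p a * poly w b)\<bar>
         \<le> 2 * e1 * (b - a) * (l1_length p q a b + e0) + e0 * l1_length p q a b"
proof -
  define L where "L = l1_length p q a b"
  define E1 where "E1 x = poly (pderiv u) x * (poly q x - poly q a) - poly (pderiv w) x * (poly p x - poly p a)"
    for x
  define E2 where "E2 x = poly (pderiv p) x * poly w x - poly (pderiv q) x * poly u x" for x
  define E3 where "E3 x = poly (pderiv u) x * poly w x - poly (pderiv w) x * poly u x" for x
  define G where "G x = 2 * e1 * (L + e0) + e0 * (\<bar>poly (pderiv p) x\<bar> + \<bar>poly (pderiv q) x\<bar>)" for x
  have "\<bar>E1 x + E2 x + E3 x\<bar> \<le> G x" if x: "x \<in> {a..b}" for x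
  proof -
    have u: "\<bar>poly u x\<bar> \<le> e0" "\<bar>poly (pderiv u) x\<bar> \<le> e1"
      and w: "\<bar>poly w x\<bar> \<le> e0" "\<bar>poly (pderiv w) x\<bar> \<le> e1"
      using bounds[OF x] by auto
    have pq: "\<bar>poly p x - poly p a\<bar> \<le> L" "\<bar>poly q x - poly q a\<bar> \<le> L"
      using abs_poly_diff_le_l1_length x unfolding L_def by auto
    have "\<bar>E1 x + E2 x + E3 x\<bar> \<le> \<bar>E1 x\<bar> + \<bar>E2 x\<bar> + \<bar>E3 x\<bar>"
      by linarith
    also have "\<dots> \<le> (e1 * L + e1 * L) + (\<bar>poly (pderiv p) x\<bar> * e0 + \<bar>poly (pderiv q) x\<bar> * e0)
        + (e1 * e0 + e1 * e0)"
      unfolding E1_def E2_def E3_def by (intro add_mono abs_mult_diff_le u w pq order_refl)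
    also have "\<dots> = G x"
      by (simp add: G_def algebra_simps)
    finally show ?thesis .
  qed
  moreover have "(\<lambda>x. E1 x + E2 x + E3 x) integrable_on {a..b}" "G integrable_on {a..b}"
    unfolding E1_def E2_def E3_def G_def by (intro integrable_continuous_interval continuous_intros)+
  ultimately have "\<bar>integral {a..b} (\<lambda>x. E1 x + E2 x + E3 x)\<bar> \<le> integral {a..b} G"
    using integral_norm_bound_integral[of "\<lambda>x. E1 x + E2 x + E3 x" "{a..b}" G] by simp
  also have "integral {a..b} G = 2 * e1 * (b - a) * (L + e0) + e0 * L"
  proof -
    have "integral {a..b} G = integral {a..b} (\<lambda>x. 2 * e1 * (L + e0))
        + integral {a..b} (\<lambda>x. e0 * (\<bar>poly (pderiv p) x\<bar> + \<bar>poly (pderiv q) x\<bar>))"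
      unfolding G_def by (rule integral_add) (intro integrable_continuous_interval continuous_intros)+
    then show ?thesis using assms(1) by (simp add: L_def l1_length_def)
  qed
  finally show ?thesis
    unfolding area_integral_add_eq[OF assms(1-3)] E1_def E2_def E3_def L_def .
qed

section \<open>Comparing the continuous and discrete quotients\<close>

lemma abs_div_le_of_comparable:
  fixes Ac Ad Vc Vd c e :: real
  assumes "0 < Vc" "0 < Vd" "Vc \<le> c * Vd" "\<bar>Ac - Ad\<bar> \<le> e * Vd"
  shows "\<bar>Ad / Vd\<bar> \<le> c * \<bar>Ac / Vc\<bar> + e"
proof -
  have "\<bar>Ac\<bar> \<le> c * \<bar>Ac / Vc\<bar> * Vd"
    using mult_left_mono[OF assms(3), of "\<bar>Ac / Vc\<bar>"] assms(1) by (simp add: abs_divide field_simps)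
  then have "\<bar>Ad\<bar> \<le> (c * \<bar>Ac / Vc\<bar> + e) * Vd"
    using assms(4) by (simp add: algebra_simps)
  then show ?thesis using assms(2) by (simp add: abs_divide pos_divide_le_eq)
qed

lemma A_cont_A_disc_estimates:
  fixes f g h :: "real \<Rightarrow> real"
  assumes "0 < m" and card_X: "card X = m + 1" and "a \<in> X" "b \<in> X" "a < b" "0 \<le> \<eta>"
    and "interp_taylor_close m X f a b \<eta>" "interp_taylor_close m X g a b \<eta>"
  defines "e0 \<equiv> \<eta> * diameter X ^ m"
    and "L \<equiv> l1_length (taylor_poly m f a) (taylor_poly m g a) a b"
  shows "\<bar>A_cont m f g h a b - A_disc m X f g h a b\<bar> \<le> 2 * e0 * (3 * L + 2 * e0)"
    and "L \<le> l1_length (interp m X f) (interp m X g) a b + 2 * e0"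
proof -
  define D where "D = diameter X"
  define e1 where "e1 = \<eta> * D ^ (m - 1)"
  define Tf where "Tf = taylor_poly m f a"
  define Tg where "Tg = taylor_poly m g a"
  define u where "u = interp m X f - Tf"
  define w where "w = interp m X g - Tg"
  have Pf: "interp m X f = Tf + u" and Pg: "interp m X g = Tg + w" by (simp_all add: u_def w_def)
  have "finite X" using card_X finite_if_card_eq_Suc by simp
  then have "b - a \<le> D"
    unfolding D_def using \<open>a \<in> X\<close> \<open>b \<in> X\<close> by (intro diff_le_diameter finite_imp_bounded)
  have "0 \<le> e0" "0 \<le> e1" "0 \<le> L"
    using \<open>0 \<le> \<eta>\<close> \<open>a < b\<close> \<open>b - a \<le> D\<close> l1_length_nonneg by (simp_all add: e0_def e1_def D_def L_def)
  have "e1 * D = e0"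
    using \<open>0 < m\<close> by (cases m) (simp_all add: e0_def e1_def D_def)
  then have "e1 * (b - a) \<le> e0"
    using mult_left_mono[OF \<open>b - a \<le> D\<close> \<open>0 \<le> e1\<close>] by simp
  have agree: "poly (interp m X \<phi>) x = \<phi> x" "poly (taylor_poly m \<phi> a) a = \<phi> a" if "x \<in> X" for \<phi> x
    using interp_spec(2)[OF card_X that] poly_higher_pderiv_taylor_poly[of 0 m \<phi> a] by simp_all
  have uw_a: "poly u a = 0" "poly w a = 0"
    using agree \<open>a \<in> X\<close> by (simp_all add: u_def w_def Tf_def Tg_def)
  have uw_bounds: "\<bar>poly u x\<bar> \<le> e0 \<and> \<bar>poly w x\<bar> \<le> e0 \<and> \<bar>poly (pderiv u) x\<bar> \<le> e1 \<and> \<bar>poly (pderiv w) x\<bar> \<le> e1"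
    if "x \<in> {a..b}" for x
    using assms(7,8) that unfolding interp_taylor_close_def
    by (simp add: u_def w_def Tf_def Tg_def e0_def e1_def D_def pderiv_diff)
  have "f a = poly Tf a" "g a = poly Tg a" "f b = poly Tf b + poly u b" "g b = poly Tg b + poly w b"
    using agree \<open>b \<in> X\<close> by (simp_all add: Tf_def Tg_def u_def w_def)
  then have "A_cont m f g h a b - A_disc m X f g h a b
      = 2 * (area_integral (Tf + u) (Tg + w) a b - area_integral Tf Tg a b
             - (poly Tg a * poly u b - poly Tf a * poly w b))"
    unfolding A_cont_eq A_disc_eq Pf Pg Tf_def[symmetric] Tg_def[symmetric] by (simp add: algebra_simps)
  also have "\<bar>\<dots>\<bar> \<le> 2 * (2 * e1 * (b - a) * (L + e0) + e0 * L)"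
  proof -
    have "\<bar>area_integral (Tf + u) (Tg + w) a b - area_integral Tf Tg a b
        - (poly Tg a * poly u b - poly Tf a * poly w b)\<bar> \<le> 2 * e1 * (b - a) * (L + e0) + e0 * L"
      unfolding L_def Tf_def[symmetric] Tg_def[symmetric] using \<open>a < b\<close>
      by (intro area_integral_perturb uw_a uw_bounds) auto
    then show ?thesis by simp
  qed
  also have "\<dots> \<le> 2 * (2 * e0 * (L + e0) + e0 * L)"
    using mult_right_mono[OF \<open>e1 * (b - a) \<le> e0\<close>, of "L + e0"] \<open>0 \<le> L\<close> \<open>0 \<le> e0\<close> by simp
  finally show "\<bar>A_cont m f g h a b - A_disc m X f g h a b\<bar> \<le> 2 * e0 * (3 * L + 2 * e0)"
    by (simp add: algebra_simps)
  have "L \<le> l1_length (interp m X f) (interp m X g) a b + 2 * e1 * (b - a)"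
    unfolding L_def Pf Pg Tf_def[symmetric] Tg_def[symmetric]
    using l1_length_perturb uw_bounds \<open>a < b\<close> by simp
  then show "L \<le> l1_length (interp m X f) (interp m X g) a b + 2 * e0"
    using \<open>e1 * (b - a) \<le> e0\<close> by simp
qed

lemma abs_A_disc_div_V_disc_le:
  fixes f g h :: "real \<Rightarrow> real"
  assumes "0 < m" and card_X: "card X = m + 1" and "a \<in> X" "b \<in> X" "a < b" "0 \<le> \<eta>" "\<eta> \<le> 1"
    and "interp_taylor_close m X f a b \<eta>" "interp_taylor_close m X g a b \<eta>"
  shows "\<bar>A_disc m X f g h a b / V_disc m X f g a b\<bar>
           \<le> 3 * \<bar>A_cont m f g h a b / V_cont m f g a b\<bar> + 16 * \<eta>"
proof -
  define D where "D = diameter X"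
  define Q where "Q = D ^ m"
  define L where "L = l1_length (taylor_poly m f a) (taylor_poly m g a) a b"
  define LP where "LP = l1_length (interp m X f) (interp m X g) a b"
  note estimates = A_cont_A_disc_estimates[OF assms(1-6,8,9), folded L_def LP_def, unfolded D_def[symmetric] Q_def[symmetric]]
  have "finite X" using card_X finite_if_card_eq_Suc by simp
  then have "b - a \<le> D"
    unfolding D_def using \<open>a \<in> X\<close> \<open>b \<in> X\<close> by (intro diff_le_diameter finite_imp_bounded)
  then have "0 < D" using \<open>a < b\<close> by simp
  have "0 \<le> L" "0 \<le> LP" "0 \<le> \<eta> * Q" using l1_length_nonneg \<open>0 \<le> \<eta>\<close> \<open>0 < D\<close>
    by (simp_all add: L_def LP_def Q_def)
  have \<eta>QQ: "\<eta> * (Q * Q) \<le> Q * Q" and "0 \<le> Q * LP"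
    using \<open>\<eta> \<le> 1\<close> \<open>0 < D\<close> \<open>0 \<le> LP\<close> by (simp_all add: Q_def mult_left_le_one_le)
  have V_disc: "V_disc m X f g a b = Q * Q + Q * LP"
    by (simp add: V_disc_eq Q_def D_def LP_def power_add[symmetric] mult_2)
  have "\<bar>A_cont m f g h a b - A_disc m X f g h a b\<bar> \<le> 2 * (\<eta> * Q) * (3 * L + 2 * (\<eta> * Q))"
    using estimates(1) .
  also have "\<dots> \<le> 2 * (\<eta> * Q) * (3 * LP + 8 * (\<eta> * Q))"
    using estimates(2) \<open>0 \<le> \<eta> * Q\<close> by (intro mult_left_mono) linarith+
  also have "\<dots> = \<eta> * (6 * (Q * LP) + 16 * (\<eta> * (Q * Q)))" by (simp add: algebra_simps)
  also have "\<dots> \<le> \<eta> * (16 * (Q * Q) + 16 * (Q * LP))"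
    using \<eta>QQ \<open>0 \<le> Q * LP\<close> \<open>0 \<le> \<eta>\<close> by (intro mult_left_mono) linarith+
  finally have A_close: "\<bar>A_cont m f g h a b - A_disc m X f g h a b\<bar> \<le> 16 * \<eta> * V_disc m X f g a b"
    by (simp add: V_disc algebra_simps)
  have "(b - a) ^ (2 * m) \<le> Q * Q" "(b - a) ^ m \<le> Q"
    unfolding Q_def power_add[symmetric] mult_2 using \<open>b - a \<le> D\<close> \<open>a < b\<close> by (auto intro!: power_mono)
  then have "V_cont m f g a b \<le> Q * Q + Q * L"
    unfolding V_cont_eq L_def[symmetric] using \<open>0 \<le> L\<close> by (intro add_mono mult_right_mono)
  also have "\<dots> \<le> Q * Q + Q * (LP + 2 * (\<eta> * Q))"
    using estimates(2) \<open>0 < D\<close> by (simp add: Q_def mult_left_mono)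
  also have "\<dots> = Q * Q + Q * LP + 2 * (\<eta> * (Q * Q))"
    by (simp add: algebra_simps)
  also have "\<dots> \<le> 3 * (Q * Q) + 3 * (Q * LP)"
    using \<eta>QQ \<open>0 \<le> Q * LP\<close> by linarith
  also have "\<dots> = 3 * V_disc m X f g a b"
    by (simp add: V_disc)
  finally have "V_cont m f g a b \<le> 3 * V_disc m X f g a b" .
  moreover have "0 < V_cont m f g a b"
    using \<open>a < b\<close> l1_length_nonneg by (simp add: V_cont_eq add_pos_nonneg)
  moreover have "0 < V_disc m X f g a b"
    using \<open>0 < D\<close> \<open>0 \<le> Q * LP\<close> by (simp add: V_disc Q_def add_pos_nonneg)
  ultimately show ?thesis using A_close by (intro abs_div_le_of_comparable) auto
qed

lemma discrete_AV_condition_if_AV_condition: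
  fixes f g h :: "real \<Rightarrow> real"
  assumes "0 < m" "Cm_curve m f g h" "bounded K" "AV_condition m f g h K"
  shows "discrete_AV_condition m f g h K"
  unfolding discrete_AV_condition_def
proof (intro allI impI)
  fix \<epsilon> :: real assume "0 < \<epsilon>"
  define \<eta> where "\<eta> = min 1 (\<epsilon> / 32)"
  have "0 < \<eta>" "\<eta> \<le> 1" "16 * \<eta> \<le> \<epsilon> / 2" using \<open>0 < \<epsilon>\<close> by (auto simp: \<eta>_def)
  have "Cm m f" "Cm m g" using assms(2) unfolding Cm_curve_def by auto
  obtain \<delta>f \<delta>g where "0 < \<delta>f" "0 < \<delta>g"
    and \<delta>f: "\<And>X a b. X \<subseteq> K \<Longrightarrow> card X = m + 1 \<Longrightarrow> diameter X < \<delta>f \<Longrightarrow> a \<in> X \<Longrightarrow> b \<in> X \<Longrightarrow>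
      interp_taylor_close m X f a b \<eta>"
    and \<delta>g: "\<And>X a b. X \<subseteq> K \<Longrightarrow> card X = m + 1 \<Longrightarrow> diameter X < \<delta>g \<Longrightarrow> a \<in> X \<Longrightarrow> b \<in> X \<Longrightarrow>
      interp_taylor_close m X g a b \<eta>"
    using interp_taylor_close_uniformly[OF \<open>Cm m f\<close> \<open>0 < m\<close> \<open>bounded K\<close> \<open>0 < \<eta>\<close>]
      interp_taylor_close_uniformly[OF \<open>Cm m g\<close> \<open>0 < m\<close> \<open>bounded K\<close> \<open>0 < \<eta>\<close>] by metis
  have "0 < \<epsilon> / 6" using \<open>0 < \<epsilon>\<close> by simp
  then obtain \<delta>c where "0 < \<delta>c" and \<delta>c: "\<forall>a\<in>K. \<forall>b\<in>K. 0 < b - a \<and> b - a < \<delta>c \<longrightarrow>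
      \<bar>A_cont m f g h a b / V_cont m f g a b\<bar> < \<epsilon> / 6"
    using assms(4) unfolding AV_condition_def by blast
  show "\<exists>\<delta>>0. \<forall>X a b. X \<subseteq> K \<and> card X = m + 1 \<and> diameter X < \<delta> \<and> a \<in> X \<and> b \<in> X \<and> a < b \<longrightarrow>
      \<bar>A_disc m X f g h a b / V_disc m X f g a b\<bar> < \<epsilon>"
  proof (intro exI[of _ "min \<delta>c (min \<delta>f \<delta>g)"] conjI allI impI)
    show "0 < min \<delta>c (min \<delta>f \<delta>g)" using \<open>0 < \<delta>c\<close> \<open>0 < \<delta>f\<close> \<open>0 < \<delta>g\<close> by simp
    fix X a b
    assume "X \<subseteq> K \<and> card X = m + 1 \<and> diameter X < min \<delta>c (min \<delta>f \<delta>g) \<and> a \<in> X \<and> b \<in> X \<and> a < b"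
    then have X: "X \<subseteq> K" "card X = m + 1" "diameter X < min \<delta>c (min \<delta>f \<delta>g)"
      and ab: "a \<in> X" "b \<in> X" "a < b" by auto
    have "finite X" using X(2) finite_if_card_eq_Suc by simp
    then have "b - a \<le> diameter X" using ab by (intro diff_le_diameter finite_imp_bounded)
    then have "a \<in> K" "b \<in> K" "0 < b - a" "b - a < \<delta>c" using X ab by auto
    then have "\<bar>A_cont m f g h a b / V_cont m f g a b\<bar> < \<epsilon> / 6" using \<delta>c by blast
    moreover have "\<bar>A_disc m X f g h a b / V_disc m X f g a b\<bar>
        \<le> 3 * \<bar>A_cont m f g h a b / V_cont m f g a b\<bar> + 16 * \<eta>"
      using X ab \<open>0 < \<eta>\<close> \<open>\<eta> \<le> 1\<close>
      by (intro abs_A_disc_div_V_disc_le \<open>0 < m\<close> \<delta>f \<delta>g) auto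
    ultimately show "\<bar>A_disc m X f g h a b / V_disc m X f g a b\<bar> < \<epsilon>"
      using \<open>16 * \<eta> \<le> \<epsilon> / 2\<close> by linarith
  qed
qed

lemma AV_quotient_diff_small:
  assumes "AV_condition m f g h K" "discrete_AV_condition m f g h K"
  shows "\<forall>\<epsilon>>0. \<exists>\<delta>>0. \<forall>X a b. X \<subseteq> K \<and> card X = m + 1 \<and> diameter X < \<delta>
            \<and> a \<in> X \<and> b \<in> X \<and> a < b \<longrightarrow>
            \<bar>A_cont m f g h a b / V_cont m f g a b - A_disc m X f g h a b / V_disc m X f g a b\<bar> < \<epsilon>"
proof (intro allI impI)
  fix \<epsilon> :: real assume "0 < \<epsilon>"
  then have "0 < \<epsilon> / 2" by simp
  then obtain \<delta>d \<delta>c where "0 < \<delta>d" "0 < \<delta>c"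
    and \<delta>d: "\<forall>X a b. X \<subseteq> K \<and> card X = m + 1 \<and> diameter X < \<delta>d \<and> a \<in> X \<and> b \<in> X \<and> a < b \<longrightarrow>
        \<bar>A_disc m X f g h a b / V_disc m X f g a b\<bar> < \<epsilon> / 2"
    and \<delta>c: "\<forall>a\<in>K. \<forall>b\<in>K. 0 < b - a \<and> b - a < \<delta>c \<longrightarrow>
        \<bar>A_cont m f g h a b / V_cont m f g a b\<bar> < \<epsilon> / 2"
    using assms unfolding discrete_AV_condition_def AV_condition_def by metis
  show "\<exists>\<delta>>0. \<forall>X a b. X \<subseteq> K \<and> card X = m + 1 \<and> diameter X < \<delta> \<and> a \<in> X \<and> b \<in> X \<and> a < b \<longrightarrow>
      \<bar>A_cont m f g h a b / V_cont m f g a b - A_disc m X f g h a b / V_disc m X f g a b\<bar> < \<epsilon>"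
  proof (intro exI[of _ "min \<delta>d \<delta>c"] conjI allI impI)
    show "0 < min \<delta>d \<delta>c" using \<open>0 < \<delta>d\<close> \<open>0 < \<delta>c\<close> by simp
    fix X a b
    assume X: "X \<subseteq> K \<and> card X = m + 1 \<and> diameter X < min \<delta>d \<delta>c \<and> a \<in> X \<and> b \<in> X \<and> a < b"
    then have "finite X" using finite_if_card_eq_Suc by auto
    then have "b - a \<le> diameter X" using X by (intro diff_le_diameter finite_imp_bounded) auto
    then have "a \<in> K" "b \<in> K" "0 < b - a" "b - a < \<delta>c" using X by auto
    then have "\<bar>A_cont m f g h a b / V_cont m f g a b\<bar> < \<epsilon> / 2" using \<delta>c by blast
    moreover have "\<bar>A_disc m X f g h a b / V_disc m X f g a b\<bar> < \<epsilon> / 2"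
      using \<delta>d[rule_format, of X a b] X by auto
    ultimately show "\<bar>A_cont m f g h a b / V_cont m f g a b - A_disc m X f g h a b / V_disc m X f g a b\<bar> < \<epsilon>"
      by linarith
  qed
qed

theorem lemma4p4:
  fixes m :: nat and f g h :: "real \<Rightarrow> real" and K :: "real set"
  assumes "0 < m"
    and "Cm_curve m f g h"
    and "compact K"
    and "infinite K \<or> m + 1 \<le> card K"
    and "AV_condition m f g h K"
  shows "(\<forall>\<epsilon>>0. \<exists>\<delta>>0. \<forall>X a b. X \<subseteq> K \<and> card X = m + 1 \<and> diameter X < \<delta>
            \<and> a \<in> X \<and> b \<in> X \<and> a < b \<longrightarrow>
            \<bar>A_cont m f g h a b / V_cont m f g a b - A_disc m X f g h a b / V_disc m X f g a b\<bar> < \<epsilon>)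
         \<and> discrete_AV_condition m f g h K"
proof -
  have "discrete_AV_condition m f g h K"
    using discrete_AV_condition_if_AV_condition[OF assms(1,2) compact_imp_bounded[OF assms(3)] assms(5)] .
  then show ?thesis using AV_quotient_diff_small[OF assms(5)] by blast
qed

end
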